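(* Let $U=\begin{bmatrix} a & b\\ c & d\end{bmatrix}$ be any $2\times 2$ unitary matrix. Then every uniform measure on $\mathbb{Z}$ is a stationary measure of the two-state quantum walk defined by $U$, i.e. $\mathcal{M}_{unif}\subseteq \mathcal{M}_s(U)$.
   Context: Two-state discrete-time quantum walk on $\mathbb{Z}$: a state is $\Psi=(\Psi(x))_{x\in\mathbb{Z}}\in(\mathbb{C}^2)^{\mathbb{Z}}$ with $\Psi(x)={}^T[\Psi^L(x),\Psi^R(x)]$ (no summability is required). Write $P=\begin{bmatrix} a & b\\ 0&0\end{bmatrix}$, $Q=\begin{bmatrix} 0&0\\ c&d\end{bmatrix}$, so $U=P+Q$. The evolution operator $U^{(s)}$ on $(\mathbb{C}^2)^{\mathbb{Z}}$ is $(U^{(s)}\Psi)(x)=P\Psi(x+1)+Q\Psi(x-1)$, i.e. $(U^{(s)}\Psi)^L(x)=a\Psi^L(x+1)+b\Psi^R(x+1)$, $(U^{(s)}\Psi)^R(x)=c\Psi^L(x-1)+d\Psi^R(x-1)$. Define $\phi:(\mathbb{C}^2)^{\mathbb{Z}}\to[0,\infty)^{\mathbb{Z}}$ by $\phi(\Psi)(x)=|\Psi^L(x)|^2+|\Psi^R(x)|^2$. The set of stationary measures is $\mathcal{M}_s(U)=\{\mu\in[0,\infty)^{\mathbb{Z}}\setminus\{0\}:\ \exists \Psi_0\in(\mathbb{C}^2)^{\mathbb{Z}}$ with $\phi((U^{(s)})^n\Psi_0)=\mu$ for all $n\ge 0\}$. For $c>0$ the uniform measure $\mu_u^{(c)}$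 is $\mu_u^{(c)}(x)=c$ for all $x\in\mathbb{Z}$, and $\mathcal{M}_{unif}=\{\mu_u^{(c)}:c>0\}$. *)

theory Defs
  imports Complex_Main
begin

type_synonym state = "int \<Rightarrow> complex \<times> complex"  \<comment> \<open>(Psi^L(x), Psi^R(x))\<close>

definition unitary2 :: "complex \<Rightarrow> complex \<Rightarrow> complex \<Rightarrow> complex \<Rightarrow> bool" where
  "unitary2 a b c d \<longleftrightarrow>
     cnj a * a + cnj c * c = 1 \<and> cnj a * b + cnj c * d = 0 \<and>
     cnj b * a + cnj d * c = 0 \<and> cnj b * b + cnj d * d = 1"

definition evol :: "complex \<Rightarrow> complex \<Rightarrow> complex \<Rightarrow> complex \<Rightarrow> state \<Rightarrow> state" where
  "evol a b c d \<Psi> = (\<lambda>x. (a * fst (\<Psi> (x + 1)) + b * snd (\<Psi> (x + 1)),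
                           c * fst (\<Psi> (x - 1)) + d * snd (\<Psi> (x - 1))))"

definition phi :: "state \<Rightarrow> int \<Rightarrow> real" where
  "phi \<Psi> x = (cmod (fst (\<Psi> x)))\<^sup>2 + (cmod (snd (\<Psi> x)))\<^sup>2"

definition stationary_measures :: "complex \<Rightarrow> complex \<Rightarrow> complex \<Rightarrow> complex \<Rightarrow> (int \<Rightarrow> real) set" where
  "stationary_measures a b c d =
     {\<mu>. (\<forall>x. \<mu> x \<ge> 0) \<and> \<mu> \<noteq> (\<lambda>_. 0) \<and>
          (\<exists>\<Psi>0. \<forall>n::nat. phi ((evol a b c d ^^ n) \<Psi>0) = \<mu>)}"

definition uniform_measure :: "real \<Rightarrow> int \<Rightarrow> real" where
  "uniform_measure c = (\<lambda>_. c)"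

definition unif_measures :: "(int \<Rightarrow> real) set" where
  "unif_measures = {uniform_measure c | c. c > 0}"

end

theory Submission
  imports Defs
begin

(* Idea: a spatially constant state evolves as a spatially constant state, its
   common value being transformed at every step by the coin matrix U itself.
   Since U is unitary it preserves the Euclidean norm on C^2, so the measure of
   such a state is the constant |w|^2 forever.  Taking w = (sqrt c, 0) then
   realises the uniform measure of density c as a stationary measure. *)

definition coin :: "complex \<Rightarrow> complex \<Rightarrow> complex \<Rightarrow> complex \<Rightarrow> complex \<times> complex \<Rightarrow> complex \<times> complex"
  where "coin a b c d w = (a * fst w + b * snd w, c * fst w + d * snd w)"

definition sqnorm :: "complex \<times> complex \<Rightarrow> real"
  where "sqnorm w = (cmod (fst w))\<^sup>2 + (cmod (snd w))\<^sup>2"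

text \<open>A unitary coin preserves the squared norm (the identity U^* U = I read on a vector).\<close>
lemma sqnorm_coin:
  assumes "unitary2 a b c d"
  shows "sqnorm (coin a b c d w) = sqnorm w"
proof -
  obtain x y where w: "w = (x, y)" by force
  have "cnj (a*x+b*y) * (a*x+b*y) + cnj (c*x+d*y) * (c*x+d*y)
      = cnj x * x * (cnj a * a + cnj c * c) + cnj x * y * (cnj a * b + cnj c * d)
        + cnj y * x * (cnj b * a + cnj d * c) + cnj y * y * (cnj b * b + cnj d * d)"
    by (simp add: algebra_simps)
  also have "\<dots> = cnj x * x + cnj y * y"
    using assms unfolding unitary2_def by simp
  finally have "complex_of_real (sqnorm (coin a b c d w)) = complex_of_real (sqnorm w)"
    unfolding sqnorm_def coin_def w
    by (simp only: fst_conv snd_conv of_real_add complex_norm_square, simp add: mult.commute)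
  then show ?thesis by (simp only: of_real_eq_iff)
qed

lemma sqnorm_coin_iterate:
  assumes "unitary2 a b c d"
  shows "sqnorm ((coin a b c d ^^ n) w) = sqnorm w"
  by (induction n) (simp_all add: sqnorm_coin[OF assms])

lemma evol_const: "evol a b c d (\<lambda>_. w) = (\<lambda>_. coin a b c d w)"
  by (simp add: evol_def coin_def)

lemma evol_iterate_const: "(evol a b c d ^^ n) (\<lambda>_. w) = (\<lambda>_. (coin a b c d ^^ n) w)"
  by (induction n) (simp_all add: evol_const)

lemma phi_const: "phi (\<lambda>_. w) = (\<lambda>_. sqnorm w)"
  by (simp add: fun_eq_iff phi_def sqnorm_def)

lemma phi_evol_iterate_const:
  assumes "unitary2 a b c d"
  shows "phi ((evol a b c d ^^ n) (\<lambda>_. w)) = uniform_measure (sqnorm w)"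
  by (simp add: evol_iterate_const phi_const sqnorm_coin_iterate[OF assms] uniform_measure_def)

theorem theorem1:
  fixes a b c d :: complex
  assumes "unitary2 a b c d"
  shows "unif_measures \<subseteq> stationary_measures a b c d"
proof
  fix \<mu> assume "\<mu> \<in> unif_measures"
  then obtain r where r: "r > 0" and \<mu>: "\<mu> = uniform_measure r"
    by (auto simp: unif_measures_def)
  define w where "w = (complex_of_real (sqrt r), 0::complex)"
  have "sqnorm w = r"
    using r by (simp add: w_def sqnorm_def)
  then have "\<forall>n. phi ((evol a b c d ^^ n) (\<lambda>_. w)) = \<mu>"
    using phi_evol_iterate_const[OF assms] \<mu> by simp
  moreover have "\<mu> \<noteq> (\<lambda>_. 0)"
    using r \<mu> by (auto simp: uniform_measure_def dest: fun_cong[where x=0])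
  ultimately show "\<mu> \<in> stationary_measures a b c d"
    using r \<mu> by (auto simp: stationary_measures_def uniform_measure_def)
qed

end
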